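(* Let $IS\in\{\Box,\blacksquare\}^2$ and let $\tau$ be a correct compositional translation from $\mathrm{SYNCSIMPLE}$ into $\mathrm{LOCKSIMPLE}_{2,IS}$ of blocking type $(P_1,P_2)$. Then $IS=(\blacksquare,\blacksquare)$, $\tau(!)$ has a prefix in $\{P_2,T_2\}^*P_1$, and $\tau(?)$ has a prefix in $\{P_1,T_1\}^*P_2$.
   Context: $\mathrm{SYNCSIMPLE}$: subprocesses $\mathcal{U} ::= \checkmark \mid 0 \mid\, !\mathcal{U} \mid\, ?\mathcal{U}$; processes are finite parallel compositions ($\mid$ associative, commutative, $0$ a unit). Reduction: $!\mathcal{U}_1\mid ?\mathcal{U}_2\mid \mathcal{P}\to \mathcal{U}_1\mid\mathcal{U}_2\mid\mathcal{P}$. Successful: of form $\checkmark\mid\mathcal{P}$; may-convergent: reduces to a successful process; must-convergent: every reachable process is may-convergent. $\mathrm{LOCKSIMPLE}_{k,IS}$ ($IS\in\{\Box,\blacksquare\}^k$, $\Box$ empty, $\blacksquare$ full): subprocesses are words over $\{P_1,T_1,\dots,P_k,T_k\}$ followed by $0$ or $\checkmark$; states $(\mathcal{P},C)$ reduce by $(P_i\mathcal{U}\mid\mathcal{P},C)\to(\mathcal{U}\mid\mathcal{P},C[C_i:=\blacksquare])$ only if $C_i=\Box$, and $(T_i\mathcal{U}\mid\mathcal{P},C)\to(\mathcal{U}\mid\mathcal{P},C[C_i:=\Box])$ always. Success = process contains $\checkmark$; a process $\mathcal{P}$ is may/must-convergent iff the state $(\mathcal{P},IS)$ is. A compositional translation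 $\tau$ is given by words $\tau(!),\tau(?)$ with $\tau(0)=0$, $\tau(\checkmark)=\checkmark$, $\tau(!\mathcal{U})=\tau(!)\tau(\mathcal{U})$, $\tau(?\mathcal{U})=\tau(?)\tau(\mathcal{U})$, $\tau$ commuting with $\mid$; correct = preserves and reflects may- and must-convergence. Blocking type of a word $S$: execute $S$ alone from $IS$; if it gets stuck at an occurrence of $P_i$ that is the first symbol from $\{P_i,T_i\}$ in $S$ the type is $P_i$, if stuck at a later occurrence of $P_i$ the type is $P_iP_i$; $\tau$ has blocking type $(W_1,W_2)$ if $\tau(!)$ has type $W_1$ and $\tau(?)$ type $W_2$. $X^*$ denotes finite words over a symbol set $X$. *)

theory Defs
  imports Main "HOL-Library.Multiset"
begin

datatype ssub = Check | Zero | Send ssub | Recv ssub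

type_synonym sproc = "ssub multiset"

inductive sstep :: "sproc \<Rightarrow> sproc \<Rightarrow> bool" where
  "sstep ({#Send u1, Recv u2#} + Pr) ({#u1, u2#} + Pr)"

definition s_successful :: "sproc \<Rightarrow> bool" where
  "s_successful Pr \<longleftrightarrow> Check \<in># Pr"

definition s_may :: "sproc \<Rightarrow> bool" where
  "s_may Pr \<longleftrightarrow> (\<exists>Q. sstep\<^sup>*\<^sup>* Pr Q \<and> s_successful Q)"

definition s_must :: "sproc \<Rightarrow> bool" where
  "s_must Pr \<longleftrightarrow> (\<forall>Q. sstep\<^sup>*\<^sup>* Pr Q \<longrightarrow> s_may Q)"

text \<open>Lock symbols P_i and T_i (indices 1..k). Lock states are lists of booleans,
  True = full, False = empty; lock i is the (i-1)-th entry.\<close>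

datatype lsym = LP nat | LT nat

definition lock_alphabet :: "nat \<Rightarrow> lsym set" where
  "lock_alphabet k = {LP i | i. 1 \<le> i \<and> i \<le> k} \<union> {LT i | i. 1 \<le> i \<and> i \<le> k}"

text \<open>A subprocess: a word followed by 0 (False) or the success symbol (True).\<close>
type_synonym lsub = "lsym list \<times> bool"
type_synonym lproc = "lsub multiset"
type_synonym lstate = "lproc \<times> bool list"

inductive lstep :: "lstate \<Rightarrow> lstate \<Rightarrow> bool" where
  lstep_P: "\<not> C ! (i - 1) \<Longrightarrow>
     lstep (add_mset (LP i # w, b) Pr, C) (add_mset (w, b) Pr, C[i - 1 := True])"
| lstep_T: "lstep (add_mset (LT i # w, b) Pr, C) (add_mset (w, b) Pr, C[i - 1 := False])"

definition l_successful :: "lstate \<Rightarrow> bool" where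
  "l_successful S \<longleftrightarrow> ([], True) \<in># fst S"

definition l_may :: "lstate \<Rightarrow> bool" where
  "l_may S \<longleftrightarrow> (\<exists>S'. lstep\<^sup>*\<^sup>* S S' \<and> l_successful S')"

definition l_must :: "lstate \<Rightarrow> bool" where
  "l_must S \<longleftrightarrow> (\<forall>S'. lstep\<^sup>*\<^sup>* S S' \<longrightarrow> l_may S')"

fun tr_sub :: "lsym list \<Rightarrow> lsym list \<Rightarrow> ssub \<Rightarrow> lsub" where
  "tr_sub ws wr Check = ([], True)"
| "tr_sub ws wr Zero = ([], False)"
| "tr_sub ws wr (Send u) = (ws @ fst (tr_sub ws wr u), snd (tr_sub ws wr u))"
| "tr_sub ws wr (Recv u) = (wr @ fst (tr_sub ws wr u), snd (tr_sub ws wr u))"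

definition tr_proc :: "lsym list \<Rightarrow> lsym list \<Rightarrow> sproc \<Rightarrow> lproc" where
  "tr_proc ws wr Pr = image_mset (tr_sub ws wr) Pr"

text \<open>The translation with tau(!) = ws, tau(?) = wr into LOCKSIMPLE_{k,IS} is correct.\<close>
definition correct_translation :: "nat \<Rightarrow> bool list \<Rightarrow> lsym list \<Rightarrow> lsym list \<Rightarrow> bool" where
  "correct_translation k IS ws wr \<longleftrightarrow>
     length IS = k \<and> set ws \<subseteq> lock_alphabet k \<and> set wr \<subseteq> lock_alphabet k \<and>
     (\<forall>Pr. (s_may Pr \<longleftrightarrow> l_may (tr_proc ws wr Pr, IS)) \<and>
           (s_must Pr \<longleftrightarrow> l_must (tr_proc ws wr Pr, IS)))"

fun stuck_pos :: "bool list \<Rightarrow> lsym list \<Rightarrow> nat \<Rightarrow> nat option" where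
  "stuck_pos C [] n = None"
| "stuck_pos C (LP i # w) n =
     (if C ! (i - 1) then Some n else stuck_pos (C[i - 1 := True]) w (Suc n))"
| "stuck_pos C (LT i # w) n = stuck_pos (C[i - 1 := False]) w (Suc n)"

datatype btype = BP nat | BPP nat

definition blocking_type :: "bool list \<Rightarrow> lsym list \<Rightarrow> btype option" where
  "blocking_type IS S =
     (case stuck_pos IS S 0 of
        None \<Rightarrow> None
      | Some j \<Rightarrow> (case S ! j of
          LP i \<Rightarrow> Some (if (\<forall>x\<in>set (take j S). x \<noteq> LP i \<and> x \<noteq> LT i) then BP i else BPP i)
        | LT i \<Rightarrow> None))"

end

theory Submission
  imports Defs
begin

text \<open>When a word executed alone first blocks at an occurrence of \<open>P\<^sub>i\<close>, lock \<open>i\<close> is full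
  at that moment.  If this is the first symbol of the word acting on lock \<open>i\<close>, the prefix
  before it has not changed lock \<open>i\<close>, so lock \<open>i\<close> was full initially and the prefix only
  acts on the other locks.  For two locks and blocking types \<open>P\<^sub>1\<close> and \<open>P\<^sub>2\<close> this forces
  both locks to be full initially.\<close>

fun lock_update :: "bool list \<Rightarrow> lsym \<Rightarrow> bool list" where
  "lock_update C (LP i) = C[i - 1 := True]"
| "lock_update C (LT i) = C[i - 1 := False]"

fun lock_index :: "lsym \<Rightarrow> nat" where
  "lock_index (LP i) = i - 1"
| "lock_index (LT i) = i - 1"

lemma foldl_lock_update_untouched:
  assumes "\<forall>x\<in>set u. lock_index x \<noteq> l"
  shows "foldl lock_update C u ! l = C ! l"
  using assms
proof (induction u arbitrary: C)
  case Nil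
  then show ?case by simp
next
  case (Cons x u)
  then have "foldl lock_update (lock_update C x) u ! l = lock_update C x ! l" by simp
  also have "\<dots> = C ! l"
    using Cons.prems by (cases x) auto
  finally show ?case by simp
qed

lemma stuck_pos_SomeD:
  assumes "stuck_pos C w n = Some m"
  shows "\<exists>j i. m = n + j \<and> j < length w \<and> w ! j = LP i
    \<and> foldl lock_update C (take j w) ! (i - 1)"
  using assms
proof (induction w arbitrary: C n)
  case Nil
  then show ?case by simp
next
  case (Cons x w)
  show ?case
  proof (cases "\<exists>k. x = LP k \<and> C ! (k - 1)")
    case True
    then obtain k where "x = LP k" "C ! (k - 1)"
      by blast
    then show ?thesis
      using Cons.prems by (intro exI[of _ 0] exI[of _ k]) auto
  next
    case False
    then have "stuck_pos (lock_update C x) w (Suc n) = Some m"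
      using Cons.prems by (cases x) auto
    then obtain j i where "m = Suc n + j" "j < length w" "w ! j = LP i"
        "foldl lock_update (lock_update C x) (take j w) ! (i - 1)"
      using Cons.IH by blast
    then show ?thesis
      by (intro exI[of _ "Suc j"] exI[of _ i]) auto
  qed
qed

lemma blocking_type_BP_decomp:
  assumes "blocking_type IS w = Some (BP i)"
  shows "\<exists>u v. w = u @ LP i # v \<and> (\<forall>x\<in>set u. x \<noteq> LP i \<and> x \<noteq> LT i)
    \<and> foldl lock_update IS u ! (i - 1)"
proof -
  obtain m where "stuck_pos IS w 0 = Some m"
    using assms by (auto simp: blocking_type_def split: option.splits)
  then obtain k where k: "m < length w" "w ! m = LP k" "foldl lock_update IS (take m w) ! (k - 1)"
    using stuck_pos_SomeD by fastforce
  have "Some (BP i) = Some (if \<forall>x\<in>set (take m w). x \<noteq> LP k \<and> x \<noteq> LT k then BP k else BPP k)"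
    using assms \<open>stuck_pos IS w 0 = Some m\<close> k(2) by (simp add: blocking_type_def)
  then have "k = i" "\<forall>x\<in>set (take m w). x \<noteq> LP i \<and> x \<noteq> LT i"
    by (auto split: if_splits)
  moreover have "w = take m w @ LP k # drop (Suc m) w"
    using k by (metis Cons_nth_drop_Suc append_take_drop_id)
  ultimately show ?thesis
    using k(3) by blast
qed

lemma blocking_type_BP_initially_full:
  assumes "blocking_type IS w = Some (BP i)" and "set w \<subseteq> lock_alphabet k"
  shows "IS ! (i - 1) \<and> (\<exists>u v. w = u @ LP i # v \<and> set u \<subseteq> lock_alphabet k - {LP i, LT i})"
proof -
  obtain u v where w: "w = u @ LP i # v" and u: "\<forall>x\<in>set u. x \<noteq> LP i \<and> x \<noteq> LT i"
    and full: "foldl lock_update IS u ! (i - 1)"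
    using blocking_type_BP_decomp[OF assms(1)] by blast
  have u_alph: "set u \<subseteq> lock_alphabet k" and "LP i \<in> lock_alphabet k"
    using assms(2) w by auto
  \<comment> \<open>The alphabet excludes index 0, which would address the same lock as index 1.\<close>
  then have "\<forall>x\<in>set u. lock_index x \<noteq> i - 1"
    using u by (fastforce simp: lock_alphabet_def)
  then have "IS ! (i - 1)"
    using full foldl_lock_update_untouched by metis
  with w u u_alph show ?thesis
    by blast
qed

lemma lock_alphabet_2: "lock_alphabet 2 = {LP 1, LP 2, LT 1, LT 2}"
  by (auto simp: lock_alphabet_def le_Suc_eq numeral_2_eq_2)

theorem lemma5p12:
  fixes IS :: "bool list" and ws wr :: "lsym list"
  assumes "length IS = 2"
    and "correct_translation 2 IS ws wr"
    and "blocking_type IS ws = Some (BP 1)"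
    and "blocking_type IS wr = Some (BP 2)"
  shows "IS = [True, True]
    \<and> (\<exists>u v. ws = u @ LP 1 # v \<and> set u \<subseteq> {LP 2, LT 2})
    \<and> (\<exists>u v. wr = u @ LP 2 # v \<and> set u \<subseteq> {LP 1, LT 1})"
proof -
  have alph: "set ws \<subseteq> lock_alphabet 2" "set wr \<subseteq> lock_alphabet 2"
    using assms(2) by (auto simp: correct_translation_def)
  have "lock_alphabet 2 - {LP 1, LT 1} = {LP 2, LT 2}" "lock_alphabet 2 - {LP 2, LT 2} = {LP 1, LT 1}"
    by (auto simp: lock_alphabet_2)
  then have "IS ! 0 \<and> (\<exists>u v. ws = u @ LP 1 # v \<and> set u \<subseteq> {LP 2, LT 2})"
    and "IS ! 1 \<and> (\<exists>u v. wr = u @ LP 2 # v \<and> set u \<subseteq> {LP 1, LT 1})"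
    using blocking_type_BP_initially_full[OF assms(3) alph(1)]
      blocking_type_BP_initially_full[OF assms(4) alph(2)]
    by simp_all
  moreover have "IS = [IS ! 0, IS ! 1]"
    using assms(1) by (auto simp: numeral_2_eq_2 length_Suc_conv)
  ultimately show ?thesis
    by simp
qed

end
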